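(* Let $0<q<1\le p$, $A\in\mathbb{R}^{m\times n}$, $\bar{x}\in\mathbb{R}^n$, $b:=A\bar{x}$, and let $S$ be the number of nonzero groups of $\bar{x}$. Suppose every nonzero group of $\bar{x}$ is active, and the columns of $A$ indexed by the nonzero components of $\bar{x}$ are linearly independent; let $B$ be the submatrix of $A$ formed by these columns. Then there exist $\kappa>0$ and, for each $\lambda\in(0,\kappa)$, a local minimizer $x^*(\lambda)$ of $F_\lambda(x):=\|Ax-b\|_2^2+\lambda\|x\|_{p,q}^q$ such that $$\|x^*(\lambda)-\bar{x}\|_2^2\le\lambda^2q^2S\,\|(B^\top B)^{-1}\|^2\max_{i:\bar{x}_{\mathcal{G}_i}\ne0}\Big(\|\bar{x}_{\mathcal{G}_i}\|_p^{2(q-p)}\sum_{j\in\mathcal{G}_i}|\bar{x}_j|^{2p-2}\Big)\quad\text{for all }\lambda\in(0,\kappa).$$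
   Context: Group structure: $\{1,\dots,n\}$ is partitioned into disjoint nonempty index sets $\mathcal{G}_1,\dots,\mathcal{G}_r$; $x_{\mathcal{G}_i}$ is the subvector indexed by $\mathcal{G}_i$; $\|x\|_{p,q}:=(\sum_{i=1}^r\|x_{\mathcal{G}_i}\|_p^q)^{1/q}$. A group $x_{\mathcal{G}_i}$ is nonzero if some component is nonzero, and active if all its components are nonzero. $\|\cdot\|$ for a matrix is the spectral (operator 2-) norm. *)

theory Defs
  imports "HOL-Analysis.Analysis"
begin

definition group_partition :: "nat \<Rightarrow> (nat \<Rightarrow> 'n::finite set) \<Rightarrow> bool" where
  "group_partition r G \<longleftrightarrow>
     (\<forall>i\<in>{1..r}. G i \<noteq> {}) \<and>
     (\<forall>i\<in>{1..r}. \<forall>k\<in>{1..r}. i \<noteq> k \<longrightarrow> G i \<inter> G k = {}) \<and>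
     (\<Union>i\<in>{1..r}. G i) = UNIV"

definition group_pnorm :: "real \<Rightarrow> 'n::finite set \<Rightarrow> real^'n \<Rightarrow> real" where
  "group_pnorm p Gi x = (\<Sum>j\<in>Gi. \<bar>x $ j\<bar> powr p) powr (1 / p)"

definition pq_norm :: "real \<Rightarrow> real \<Rightarrow> nat \<Rightarrow> (nat \<Rightarrow> 'n::finite set) \<Rightarrow> real^'n \<Rightarrow> real" where
  "pq_norm p q r G x = (\<Sum>i\<in>{1..r}. group_pnorm p (G i) x powr q) powr (1 / q)"

definition group_nonzero :: "'n::finite set \<Rightarrow> real^'n \<Rightarrow> bool" where
  "group_nonzero Gi x \<longleftrightarrow> (\<exists>j\<in>Gi. x $ j \<noteq> 0)"

definition group_active :: "'n::finite set \<Rightarrow> real^'n \<Rightarrow> bool" where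
  "group_active Gi x \<longleftrightarrow> (\<forall>j\<in>Gi. x $ j \<noteq> 0)"

definition local_minimizer :: "(real^'n \<Rightarrow> real) \<Rightarrow> real^'n \<Rightarrow> bool" where
  "local_minimizer f x \<longleftrightarrow> (\<exists>e>0. \<forall>y. dist y x < e \<longrightarrow> f x \<le> f y)"

definition cols_independent :: "real^'n^'m \<Rightarrow> 'n set \<Rightarrow> bool" where
  "cols_independent A T \<longleftrightarrow>
     (\<forall>c. (\<Sum>j\<in>T. c j *\<^sub>R column j A) = 0 \<longrightarrow> (\<forall>j\<in>T. c j = 0))"

text \<open>B^T B where B is the submatrix of A with columns indexed by T
  (a T x T matrix, entries outside T irrelevant).\<close>
definition gram_sub :: "real^'n^'m \<Rightarrow> 'n \<Rightarrow> 'n \<Rightarrow> real" where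
  "gram_sub A j k = column j A \<bullet> column k A"

definition inv_on :: "'n set \<Rightarrow> ('n \<Rightarrow> 'n \<Rightarrow> real) \<Rightarrow> 'n \<Rightarrow> 'n \<Rightarrow> real" where
  "inv_on T M = (SOME N. \<forall>j\<in>T. \<forall>l\<in>T.
      (\<Sum>k\<in>T. M j k * N k l) = (if j = l then 1 else 0))"

definition spec_norm_on :: "'n set \<Rightarrow> ('n \<Rightarrow> 'n \<Rightarrow> real) \<Rightarrow> real" where
  "spec_norm_on T N = Sup ((\<lambda>v. sqrt (\<Sum>j\<in>T. (\<Sum>k\<in>T. N j k * v k)\<^sup>2))
                             ` {v. (\<Sum>k\<in>T. (v k)\<^sup>2) \<le> 1})"

end

theory Submission
  imports Defs
begin

text \<open>Let \<open>T\<close> be the support of \<open>xbar\<close>. Minimise \<open>F\<^sub>\<lambda>\<close> over the vectors supported in \<open>T\<close>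
  near \<open>xbar\<close>; comparing with \<open>xbar\<close> and using injectivity of \<open>A\<close> on such vectors, the minimiser
  \<open>z\<close> lies strictly inside the neighbourhood once \<open>\<lambda>\<close> is small. It is a local minimiser of
  \<open>F\<^sub>\<lambda>\<close> on the whole space, because moving a component off \<open>T\<close> by \<open>t\<close> changes the residual
  only by \<open>O(|t|)\<close> but raises the penalty by a multiple of \<open>\<lambda> |t|\<^sup>q\<close>, which dominates as \<open>q < 1\<close>.
  Since the penalty \<open>P(x) = \<parallel>x\<parallel>\<^sub>p\<^sub>,\<^sub>q\<^sup>q\<close> is smooth where the components in \<open>T\<close> are nonzero, \<open>z\<close> is stationary there:
  \<open>B\<^sup>T A (z - xbar) = -(\<lambda>/2) \<nabla>P(z)\<close>, hence \<open>z - xbar = -(\<lambda>/2) (B\<^sup>T B)\<^sup>-\<^sup>1 \<nabla>P(z)\<close>. Finally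
  \<open>|\<nabla>P(z)|\<^sup>2\<close> is close to \<open>|\<nabla>P(xbar)|\<^sup>2 = q\<^sup>2 \<Sum>\<^sub>i h\<^sub>i \<le> q\<^sup>2 S max h\<^sub>i\<close>, where \<open>h\<^sub>i\<close> are the
  terms inside the maximum; allowing a factor 4 absorbs the \<open>(1/2)\<^sup>2\<close>.\<close>

lemma gram_sub_sym: "gram_sub A j k = gram_sub A k j"
  by (simp add: gram_sub_def inner_commute)

lemma gram_sub_quadratic_form:
  fixes A :: "real^'n^'m"
  shows "(\<Sum>j\<in>T. c j * (\<Sum>k\<in>T. gram_sub A j k * c k)) = (norm (\<Sum>k\<in>T. c k *\<^sub>R column k A))\<^sup>2"
  by (simp add: power2_norm_eq_inner gram_sub_def inner_sum_left inner_sum_right sum_distrib_left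
      algebra_simps inner_commute)

lemma gram_sub_right_inverse_exists:
  fixes A :: "real^'n^'m" and T :: "'n set"
  assumes ci: "cols_independent A T"
  shows "\<exists>N. \<forall>j\<in>T. \<forall>l\<in>T. (\<Sum>k\<in>T. gram_sub A j k * N k l) = (if j = l then 1 else 0)"
proof -
  \<comment> \<open>extend the Gram matrix on \<open>T\<close> by the identity outside \<open>T\<close> and invert the resulting matrix\<close>
  define M' :: "real^'n^'n" where
    "M' = (\<chi> j k. if j \<in> T \<and> k \<in> T then gram_sub A j k else if j = k then 1 else 0)"
  have M'_mult: "(M' *v x) $ j = (if j \<in> T then (\<Sum>k\<in>T. gram_sub A j k * x$k) else x $ j)" for x j
  proof (cases "j \<in> T")
    case True
    have "(M' *v x) $ j = (\<Sum>k\<in>UNIV. if k \<in> T then gram_sub A j k * x$k else 0)"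
      using True by (auto simp: matrix_vector_mult_def M'_def intro!: sum.cong)
    then show ?thesis using True by (simp add: sum.If_cases)
  next
    case False
    have "(M' *v x) $ j = (\<Sum>k\<in>UNIV. if j = k then x$k else 0)"
      unfolding matrix_vector_mult_def M'_def vec_lambda_beta using False by (intro sum.cong) auto
    then show ?thesis using False by simp
  qed
  have inj: "x = 0" if hx: "M' *v x = 0" for x
  proof -
    have "(\<Sum>k\<in>T. gram_sub A j k * x$k) = 0" if "j \<in> T" for j
      using hx M'_mult[of x j] that by simp
    then have "(norm (\<Sum>k\<in>T. x$k *\<^sub>R column k A))\<^sup>2 = 0"
      using gram_sub_quadratic_form[where T=T and c="\<lambda>k. x$k" and A=A] by simp
    then have "\<forall>j\<in>T. x$j = 0" using ci unfolding cols_independent_def by simp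
    with hx M'_mult show "x = 0" by (metis vec_eq_iff zero_index)
  qed
  have "\<exists>B. B ** M' = mat 1"
    using inj by (simp add: matrix_left_invertible_injective inj_on_def)
       (metis (no_types) matrix_vector_mult_diff_distrib right_minus_eq)
  then obtain B where "B ** M' = mat 1" by blast
  then have MB: "M' ** B = mat 1" using matrix_left_right_inverse by blast
  show ?thesis
  proof (intro exI ballI)
    fix j l assume j: "j \<in> T" and l: "l \<in> T"
    have "(M' ** B) $ j $ l = (\<Sum>k\<in>UNIV. if k \<in> T then gram_sub A j k * B$k$l else 0)"
      using j by (auto simp: matrix_matrix_mult_def M'_def intro!: sum.cong)
    also have "\<dots> = (\<Sum>k\<in>T. gram_sub A j k * B$k$l)"
      by (simp add: sum.If_cases)
    finally show "(\<Sum>k\<in>T. gram_sub A j k * (\<lambda>k l. B$k$l) k l) = (if j = l then 1 else 0)"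
      using MB by (simp add: mat_def)
  qed
qed

lemma left_inverse_on_if_symmetric:
  fixes M N :: "'a \<Rightarrow> 'a \<Rightarrow> real"
  assumes "finite T"
    and sym: "\<forall>j\<in>T. \<forall>k\<in>T. M j k = M k j"
    and right: "\<forall>j\<in>T. \<forall>l\<in>T. (\<Sum>k\<in>T. M j k * N k l) = (if j = l then 1 else 0)"
  shows "\<forall>j\<in>T. \<forall>l\<in>T. (\<Sum>k\<in>T. N j k * M k l) = (if j = l then 1 else 0)"
proof -
  have transposed: "(\<Sum>k\<in>T. N k j * M k l) = (if j = l then 1 else 0)" if "j \<in> T" "l \<in> T" for j l
  proof -
    have "(\<Sum>k\<in>T. N k j * M k l) = (\<Sum>k\<in>T. M l k * N k j)"
      using sym that by (intro sum.cong) (auto simp: mult.commute)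
    also have "\<dots> = (if l = j then 1 else 0)" using right that by blast
    finally show ?thesis by auto
  qed
  \<comment> \<open>\<open>N = (N\<^sup>T M) N = N\<^sup>T (M N) = N\<^sup>T\<close>\<close>
  have N_sym: "N j l = N l j" if "j \<in> T" "l \<in> T" for j l
  proof -
    have "N j l = (\<Sum>k\<in>T. (if j = k then 1 else 0) * N k l)"
      using that \<open>finite T\<close> by (simp add: if_distrib[of "\<lambda>t. t * N _ l"] cong: if_cong)
    also have "\<dots> = (\<Sum>k\<in>T. (\<Sum>m\<in>T. N m j * M m k) * N k l)"
      using transposed that by (intro sum.cong) auto
    also have "\<dots> = (\<Sum>k\<in>T. \<Sum>m\<in>T. N m j * (M m k * N k l))"
      by (simp add: sum_distrib_right mult.assoc)
    also have "\<dots> = (\<Sum>m\<in>T. N m j * (\<Sum>k\<in>T. M m k * N k l))"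
      by (subst sum.swap) (simp add: sum_distrib_left)
    also have "\<dots> = (\<Sum>m\<in>T. N m j * (if m = l then 1 else 0))"
      using right that by (intro sum.cong) auto
    also have "\<dots> = N l j"
      using that \<open>finite T\<close> by (simp add: if_distrib[of "\<lambda>t. N _ j * t"] cong: if_cong)
    finally show ?thesis .
  qed
  show ?thesis
  proof (intro ballI)
    fix j l assume "j \<in> T" "l \<in> T"
    then have "(\<Sum>k\<in>T. N j k * M k l) = (\<Sum>k\<in>T. N k j * M k l)"
      using N_sym by (intro sum.cong) auto
    then show "(\<Sum>k\<in>T. N j k * M k l) = (if j = l then 1 else 0)"
      using transposed \<open>j \<in> T\<close> \<open>l \<in> T\<close> by simp
  qed
qed

lemma bdd_above_spec_norm_on_image:
  fixes T :: "'n::finite set"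
  shows "bdd_above ((\<lambda>v. sqrt (\<Sum>j\<in>T. (\<Sum>k\<in>T. N j k * v k)\<^sup>2)) ` {v. (\<Sum>k\<in>T. (v k)\<^sup>2) \<le> 1})"
proof (rule bdd_aboveI2)
  fix w :: "'n \<Rightarrow> real" assume w: "w \<in> {v. (\<Sum>k\<in>T. (v k)\<^sup>2) \<le> 1}"
  have "\<bar>w k\<bar> \<le> 1" if "k \<in> T" for k
  proof -
    have "(w k)\<^sup>2 \<le> (\<Sum>k\<in>T. (w k)\<^sup>2)"
      using that by (intro member_le_sum) auto
    then have "(w k)\<^sup>2 \<le> 1" using w by simp
    then show ?thesis by (simp add: abs_square_le_1)
  qed
  then have "\<bar>\<Sum>k\<in>T. N j k * w k\<bar> \<le> (\<Sum>k\<in>T. \<bar>N j k\<bar>)" for j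
    by (intro order.trans[OF sum_abs] sum_mono) (auto simp: abs_mult intro: mult_left_le)
  then have "(\<Sum>k\<in>T. N j k * w k)\<^sup>2 \<le> (\<Sum>k\<in>T. \<bar>N j k\<bar>)\<^sup>2" for j
    by (metis abs_ge_zero power2_abs power_mono)
  then show "sqrt (\<Sum>j\<in>T. (\<Sum>k\<in>T. N j k * w k)\<^sup>2) \<le> sqrt (\<Sum>j\<in>T. (\<Sum>k\<in>T. \<bar>N j k\<bar>)\<^sup>2)"
    by (intro real_sqrt_le_mono sum_mono)
qed

lemma spec_norm_on_nonneg:
  fixes T :: "'n::finite set"
  shows "0 \<le> spec_norm_on T N"
proof -
  have "(\<lambda>_. 0) \<in> {v. (\<Sum>k\<in>T. (v k)\<^sup>2) \<le> (1::real)}" by simp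
  from cSUP_upper[OF this bdd_above_spec_norm_on_image, of N]
  show ?thesis unfolding spec_norm_on_def by simp
qed

lemma spec_norm_on_bound:
  fixes T :: "'n::finite set"
  shows "sqrt (\<Sum>j\<in>T. (\<Sum>k\<in>T. N j k * v k)\<^sup>2) \<le> spec_norm_on T N * sqrt (\<Sum>k\<in>T. (v k)\<^sup>2)"
proof (cases "(\<Sum>k\<in>T. (v k)\<^sup>2) = 0")
  case True
  then have "\<forall>k\<in>T. v k = 0" by (simp add: sum_nonneg_eq_0_iff)
  then show ?thesis using spec_norm_on_nonneg by simp
next
  case False
  define s where "s = sqrt (\<Sum>k\<in>T. (v k)\<^sup>2)"
  have s0: "s > 0" using False s_def by (simp add: sum_nonneg order_less_le)
  have "(\<Sum>k\<in>T. (v k / s)\<^sup>2) = (\<Sum>k\<in>T. (v k)\<^sup>2) / s\<^sup>2"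
    unfolding power_divide by (rule sum_divide_distrib[symmetric])
  also have "\<dots> = 1" using s0 s_def False by (simp add: sum_nonneg)
  finally have "(\<lambda>k. v k / s) \<in> {v. (\<Sum>k\<in>T. (v k)\<^sup>2) \<le> 1}" by simp
  from cSUP_upper[OF this bdd_above_spec_norm_on_image, of N]
  have "sqrt (\<Sum>j\<in>T. (\<Sum>k\<in>T. N j k * (v k / s))\<^sup>2) \<le> spec_norm_on T N"
    unfolding spec_norm_on_def by simp
  moreover have "(\<Sum>j\<in>T. (\<Sum>k\<in>T. N j k * (v k / s))\<^sup>2) = (\<Sum>j\<in>T. (\<Sum>k\<in>T. N j k * v k)\<^sup>2) / s\<^sup>2"
    by (simp add: sum_divide_distrib[symmetric] power_divide)
  ultimately have "sqrt (\<Sum>j\<in>T. (\<Sum>k\<in>T. N j k * v k)\<^sup>2) / s \<le> spec_norm_on T N"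
    using s0 by (simp add: real_sqrt_divide)
  then show ?thesis using s0 unfolding s_def by (simp add: divide_le_eq mult.commute)
qed

lemma sum_inner_column_power2_le:
  fixes A :: "real^'n^'m"
  shows "(\<Sum>k\<in>T. (column k A \<bullet> v)\<^sup>2) \<le> (\<Sum>k\<in>T. (norm (column k A))\<^sup>2) * (norm v)\<^sup>2"
proof -
  have "(column k A \<bullet> v)\<^sup>2 \<le> (norm (column k A))\<^sup>2 * (norm v)\<^sup>2" for k
    by (metis Cauchy_Schwarz_ineq2 abs_ge_zero power2_abs power_mono power_mult_distrib)
  then show ?thesis by (simp add: sum_distrib_right sum_mono)
qed

lemma abs_powr_eq_power2_powr: "\<bar>x::real\<bar> powr e = (x\<^sup>2) powr (e/2)"
proof (cases "x = 0")
  case False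
  then have sq: "x\<^sup>2 = \<bar>x\<bar> powr 2" by (simp add: powr_realpow[symmetric])
  show ?thesis unfolding sq powr_powr by simp
qed simp

lemma has_real_derivative_abs_powr_line:
  fixes a c p :: real
  assumes "a \<noteq> 0"
  shows "((\<lambda>t. \<bar>a + t*c\<bar> powr p) has_real_derivative p * \<bar>a\<bar> powr (p-2) * a * c) (at 0)"
proof -
  have "((\<lambda>t. (a + t*c)\<^sup>2) has_real_derivative 2 * a * c) (at 0)"
    by (auto intro!: derivative_eq_intros)
  from DERIV_fun_powr[OF this, of "p/2"]
  have "((\<lambda>t. ((a + t*c)\<^sup>2) powr (p/2)) has_real_derivative
      (p/2) * (a\<^sup>2) powr (p/2 - of_nat 1) * (2 * a * c)) (at 0)"
    using assms by simp
  moreover have "(a\<^sup>2) powr (p/2 - of_nat 1) = \<bar>a\<bar> powr (p-2)"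
    using abs_powr_eq_power2_powr[of a "p-2"] by (simp add: diff_divide_distrib)
  ultimately show ?thesis
    by (simp add: abs_powr_eq_power2_powr[of _ p] mult_ac)
qed

lemma has_real_derivative_norm_power2_line:
  fixes a c :: "'a::real_inner"
  shows "((\<lambda>t. (norm (a + t *\<^sub>R c))\<^sup>2) has_real_derivative 2 * (a \<bullet> c)) (at 0)"
proof -
  have "(\<lambda>t. (norm (a + t *\<^sub>R c))\<^sup>2) = (\<lambda>t. a \<bullet> a + 2 * t * (a \<bullet> c) + t\<^sup>2 * (c \<bullet> c))"
    unfolding power2_norm_eq_inner
    by (intro ext) (simp add: inner_add_left inner_add_right inner_commute power2_eq_square algebra_simps)
  then show ?thesis by (auto intro!: derivative_eq_intros)
qed

lemma powr_ge_linear_below: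
  fixes y \<epsilon> q :: real
  assumes "0 \<le> y" "y \<le> \<epsilon>" "q < 1"
  shows "\<epsilon> powr (q-1) * y \<le> y powr q"
proof (cases "y = 0")
  case False
  then have y0: "y > 0" using assms by simp
  then have "\<epsilon> powr (q-1) * y \<le> y powr (q-1) * y"
    using powr_mono2'[of "q-1" y \<epsilon>] assms by (simp add: mult_right_mono)
  also have "\<dots> = y powr q" using y0 by (simp add: powr_diff)
  finally show ?thesis .
qed simp

lemma norm_add_power2_ge:
  fixes u w :: "'a::real_inner"
  shows "(norm u)\<^sup>2 - 2 * (norm u * norm w) \<le> (norm (u + w))\<^sup>2"
proof -
  have "(norm (u + w))\<^sup>2 = (norm u)\<^sup>2 + 2 * (u \<bullet> w) + (norm w)\<^sup>2"
    by (simp add: power2_norm_eq_inner inner_add_left inner_add_right inner_commute)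
  moreover have "- (norm u * norm w) \<le> u \<bullet> w"
    using Cauchy_Schwarz_ineq2[of u w] by simp
  ultimately show ?thesis using zero_le_power2[of "norm w"] by linarith
qed

locale group_sparse =
  fixes p q :: real and A :: "real^'n^'m" and xbar :: "real^'n"
    and r :: nat and G :: "nat \<Rightarrow> 'n set"
  assumes partition: "group_partition r G"
    and q_pos: "0 < q" and q_less_1: "q < 1" and p_ge_1: "1 \<le> p"
    and nonzero_active: "\<forall>i\<in>{1..r}. group_nonzero (G i) xbar \<longrightarrow> group_active (G i) xbar"
    and cols_indep: "cols_independent A {j. xbar $ j \<noteq> 0}"
begin

definition "supp = {j. xbar $ j \<noteq> 0}"
definition "nzg = {i\<in>{1..r}. group_nonzero (G i) xbar}"
definition "zg = {i\<in>{1..r}. \<not> group_nonzero (G i) xbar}"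

definition supported :: "real^'n \<Rightarrow> bool"
  where "supported x \<longleftrightarrow> (\<forall>j. j \<notin> supp \<longrightarrow> x$j = 0)"

definition restrict_supp :: "real^'n \<Rightarrow> real^'n"
  where "restrict_supp x = (\<chi> j. if j \<in> supp then x$j else 0)"

definition group_psum :: "nat \<Rightarrow> real^'n \<Rightarrow> real"
  where "group_psum i x = (\<Sum>j\<in>G i. \<bar>x$j\<bar> powr p)"

definition supp_penalty :: "real^'n \<Rightarrow> real"
  where "supp_penalty x = (\<Sum>i\<in>nzg. group_psum i x powr (q/p))"

definition off_penalty :: "real^'n \<Rightarrow> real"
  where "off_penalty x = (\<Sum>i\<in>zg. group_psum i x powr (q/p))"

definition off_mass :: "real^'n \<Rightarrow> real"
  where "off_mass x = (\<Sum>j\<in>-supp. \<bar>x$j\<bar>)"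

definition objective :: "real \<Rightarrow> real^'n \<Rightarrow> real"
  where "objective lam x = (norm (A *v x - A *v xbar))\<^sup>2 + lam * pq_norm p q r G x powr q"

lemma p_pos: "0 < p"
  using p_ge_1 by simp

lemma nzg_zg: "{1..r} = nzg \<union> zg" "nzg \<inter> zg = {}" "finite nzg" "finite zg"
  unfolding nzg_def zg_def by auto

lemma group_nonempty: "i \<in> {1..r} \<Longrightarrow> G i \<noteq> {}"
  using partition unfolding group_partition_def by blast

lemma nzg_subset_supp: "i \<in> nzg \<Longrightarrow> j \<in> G i \<Longrightarrow> j \<in> supp"
  using nonzero_active unfolding nzg_def supp_def group_active_def by auto

lemma zg_disjoint_supp: "i \<in> zg \<Longrightarrow> j \<in> G i \<Longrightarrow> j \<notin> supp"
  unfolding zg_def supp_def group_nonzero_def by auto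

lemma group_unique: "i \<in> nzg \<Longrightarrow> i' \<in> nzg \<Longrightarrow> k \<in> G i \<Longrightarrow> k \<in> G i' \<Longrightarrow> i = i'"
  using partition unfolding group_partition_def nzg_def by blast

lemma group_exists: "\<exists>i\<in>{1..r}. j \<in> G i"
  using partition unfolding group_partition_def by blast

lemma supp_eq_Union: "supp = (\<Union>i\<in>nzg. G i)"
proof -
  have "\<exists>i\<in>nzg. k \<in> G i" if "k \<in> supp" for k
    using group_exists[of k] that unfolding nzg_def supp_def group_nonzero_def by auto
  then show ?thesis using nzg_subset_supp by blast
qed

lemma not_supp_in_zg: "k \<notin> supp \<Longrightarrow> \<exists>i\<in>zg. k \<in> G i"
  using group_exists[of k] nzg_subset_supp unfolding nzg_def zg_def by blast

lemma nzg_empty_iff: "nzg = {} \<longleftrightarrow> supp = {}"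
  using group_nonempty unfolding supp_eq_Union nzg_def by auto

lemma xbar_nonzero_in_nzg: "i \<in> nzg \<Longrightarrow> j \<in> G i \<Longrightarrow> xbar$j \<noteq> 0"
  using nzg_subset_supp supp_def by auto

lemma supported_xbar: "supported xbar"
  unfolding supported_def supp_def by simp

lemma supported_restrict_supp: "supported (restrict_supp x)"
  unfolding supported_def restrict_supp_def by simp

lemma supported_diff: "supported x \<Longrightarrow> supported y \<Longrightarrow> supported (x - y)"
  unfolding supported_def by simp

lemma closed_supported: "closed {x. supported x}"
proof -
  have "{x. supported x} = (\<Inter>j\<in>-supp. {x. x$j = 0})"
    unfolding supported_def by auto
  then show ?thesis by (auto intro!: closed_Collect_eq continuous_intros)
qed

lemma group_psum_pos: "i \<in> nzg \<Longrightarrow> \<forall>j\<in>G i. x$j \<noteq> 0 \<Longrightarrow> 0 < group_psum i x"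
  unfolding group_psum_def using group_nonempty[of i] nzg_def
  by (intro sum_pos) auto

lemma pq_norm_powr_eq: "pq_norm p q r G x powr q = supp_penalty x + off_penalty x"
proof -
  have "pq_norm p q r G x powr q = (\<Sum>i\<in>{1..r}. group_pnorm p (G i) x powr q)"
    unfolding pq_norm_def using q_pos by (simp add: powr_powr sum_nonneg)
  also have "\<dots> = (\<Sum>i\<in>{1..r}. group_psum i x powr (q/p))"
    by (simp add: group_pnorm_def group_psum_def powr_powr)
  also have "\<dots> = supp_penalty x + off_penalty x"
    unfolding supp_penalty_def off_penalty_def nzg_zg(1) using nzg_zg by (simp add: sum.union_disjoint)
  finally show ?thesis .
qed

lemma off_penalty_supported: "supported x \<Longrightarrow> off_penalty x = 0"
  unfolding off_penalty_def group_psum_def supported_def using zg_disjoint_supp by simp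

lemma supp_penalty_restrict_supp: "supp_penalty (restrict_supp x) = supp_penalty x"
  unfolding supp_penalty_def group_psum_def restrict_supp_def using nzg_subset_supp
  by (intro sum.cong refl arg_cong2[where f="(powr)"]) auto

lemma objective_supported:
  "supported x \<Longrightarrow> objective lam x = (norm (A *v x - A *v xbar))\<^sup>2 + lam * supp_penalty x"
  unfolding objective_def pq_norm_powr_eq using off_penalty_supported by simp

lemma continuous_on_objective: "continuous_on S (objective lam)"
proof -
  have "continuous_on S (\<lambda>x. group_psum i x)" for i
    unfolding group_psum_def using p_pos by (intro continuous_intros continuous_on_powr') auto
  moreover have "0 \<le> group_psum i x" for i x
    unfolding group_psum_def by (simp add: sum_nonneg)
  ultimately show ?thesis
    unfolding objective_def pq_norm_powr_eq supp_penalty_def off_penalty_def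
    using q_pos p_pos
    by (intro continuous_intros continuous_on_powr' matrix_vector_mult_linear_continuous_on) auto
qed

definition "Ginv = inv_on supp (gram_sub A)"
definition "ginv_norm = spec_norm_on supp Ginv"

lemma gram_Ginv: "\<forall>j\<in>supp. \<forall>l\<in>supp. (\<Sum>k\<in>supp. gram_sub A j k * Ginv k l) = (if j = l then 1 else 0)"
proof -
  have "\<exists>N. \<forall>j\<in>supp. \<forall>l\<in>supp. (\<Sum>k\<in>supp. gram_sub A j k * N k l) = (if j = l then 1 else 0)"
    using gram_sub_right_inverse_exists[OF cols_indep] unfolding supp_def .
  then show ?thesis unfolding Ginv_def inv_on_def by (rule someI_ex)
qed

lemma Ginv_gram: "\<forall>j\<in>supp. \<forall>l\<in>supp. (\<Sum>k\<in>supp. Ginv j k * gram_sub A k l) = (if j = l then 1 else 0)"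
  by (rule left_inverse_on_if_symmetric[OF _ _ gram_Ginv]) (auto simp: gram_sub_sym)

lemma matrix_vector_supported:
  "supported d \<Longrightarrow> A *v d = (\<Sum>l\<in>supp. d$l *\<^sub>R column l A)"
  unfolding supported_def
  by (simp add: matrix_mult_sum scalar_mult_eq_scaleR sum.mono_neutral_right[of UNIV supp])

lemma supported_eq_Ginv:
  assumes "supported d" "j \<in> supp"
  shows "d$j = (\<Sum>k\<in>supp. Ginv j k * (column k A \<bullet> (A *v d)))"
proof -
  have "(\<Sum>k\<in>supp. Ginv j k * (column k A \<bullet> (A *v d)))
      = (\<Sum>k\<in>supp. \<Sum>l\<in>supp. Ginv j k * gram_sub A k l * d$l)"
    using assms(1) by (simp add: matrix_vector_supported inner_sum_right gram_sub_def
        sum_distrib_left mult_ac)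
  also have "\<dots> = (\<Sum>l\<in>supp. (\<Sum>k\<in>supp. Ginv j k * gram_sub A k l) * d$l)"
    by (subst sum.swap) (simp add: sum_distrib_right)
  also have "\<dots> = (\<Sum>l\<in>supp. (if j = l then 1 else 0) * d$l)"
    using Ginv_gram assms(2) by (intro sum.cong) auto
  also have "\<dots> = d$j" using assms(2) by (simp add: if_distrib[of "\<lambda>t. t * d$_"] cong: if_cong)
  finally show ?thesis by simp
qed

lemma norm_supported: "supported d \<Longrightarrow> norm d = sqrt (\<Sum>j\<in>supp. (d$j)\<^sup>2)"
  unfolding supported_def
  by (simp add: norm_eq_sqrt_inner inner_vec_def power2_eq_square sum.mono_neutral_right[of UNIV supp])

lemma norm_supported_le:
  "supported d \<Longrightarrow> norm d \<le> ginv_norm * sqrt (\<Sum>k\<in>supp. (column k A \<bullet> (A *v d))\<^sup>2)"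
  using spec_norm_on_bound[where T=supp and N=Ginv and v="\<lambda>k. column k A \<bullet> (A *v d)"]
  by (simp add: norm_supported supported_eq_Ginv ginv_norm_def cong: sum.cong)

lemma norm_power2_supported_le:
  assumes "supported d"
  shows "(norm d)\<^sup>2 \<le> ginv_norm\<^sup>2 * (\<Sum>k\<in>supp. (norm (column k A))\<^sup>2) * (norm (A *v d))\<^sup>2"
proof -
  have "(norm d)\<^sup>2 \<le> (ginv_norm * sqrt (\<Sum>k\<in>supp. (column k A \<bullet> (A *v d))\<^sup>2))\<^sup>2"
    using norm_supported_le[OF assms] by (simp add: power_mono)
  also have "\<dots> = ginv_norm\<^sup>2 * (\<Sum>k\<in>supp. (column k A \<bullet> (A *v d))\<^sup>2)"
    by (simp add: power_mult_distrib sum_nonneg)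
  also have "\<dots> \<le> ginv_norm\<^sup>2 * ((\<Sum>k\<in>supp. (norm (column k A))\<^sup>2) * (norm (A *v d))\<^sup>2)"
    by (intro mult_left_mono sum_inner_column_power2_le) simp
  finally show ?thesis by (simp add: mult.assoc)
qed

section \<open>Local minimality off the support\<close>

lemma norm_sub_restrict_supp_le: "norm (y - restrict_supp y) \<le> off_mass y"
proof -
  have "norm (y - restrict_supp y) \<le> (\<Sum>j\<in>UNIV. \<bar>(y - restrict_supp y)$j\<bar>)"
    by (rule norm_le_l1_cart)
  also have "\<dots> = off_mass y"
    unfolding off_mass_def restrict_supp_def by (intro sum.mono_neutral_cong_right) auto
  finally show ?thesis .
qed

lemma abs_powr_le_off_penalty:
  assumes "j \<notin> supp"
  shows "\<bar>y$j\<bar> powr q \<le> off_penalty y"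
proof -
  obtain i where i: "i \<in> zg" "j \<in> G i" using not_supp_in_zg[OF assms] by blast
  have "\<bar>y$j\<bar> powr q = (\<bar>y$j\<bar> powr p) powr (q/p)" using p_pos by (simp add: powr_powr)
  also have "\<dots> \<le> group_psum i y powr (q/p)"
    unfolding group_psum_def using i p_pos q_pos
    by (intro powr_mono2) (auto intro: member_le_sum)
  also have "\<dots> \<le> off_penalty y"
    unfolding off_penalty_def using i nzg_zg(4) group_psum_def
    by (intro member_le_sum) (auto simp: sum_nonneg)
  finally show ?thesis .
qed

lemma off_mass_le_off_penalty:
  assumes "\<forall>j. j \<notin> supp \<longrightarrow> \<bar>y$j\<bar> \<le> \<epsilon>"
  shows "\<epsilon> powr (q-1) * off_mass y \<le> real CARD('n) * off_penalty y"
proof -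
  have "\<epsilon> powr (q-1) * off_mass y = (\<Sum>j\<in>-supp. \<epsilon> powr (q-1) * \<bar>y$j\<bar>)"
    unfolding off_mass_def by (simp add: sum_distrib_left)
  also have "\<dots> \<le> (\<Sum>j\<in>-supp. off_penalty y)"
  proof (intro sum_mono)
    fix j assume j: "j \<in> -supp"
    then have "\<epsilon> powr (q-1) * \<bar>y$j\<bar> \<le> \<bar>y$j\<bar> powr q"
      using assms by (intro powr_ge_linear_below q_less_1) auto
    also have "\<dots> \<le> off_penalty y" using abs_powr_le_off_penalty j by simp
    finally show "\<epsilon> powr (q-1) * \<bar>y$j\<bar> \<le> off_penalty y" .
  qed
  also have "\<dots> \<le> real CARD('n) * off_penalty y"
    using card_mono[of UNIV "-supp"] off_penalty_def group_psum_def
    by (auto intro!: mult_right_mono simp: sum_nonneg)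
  finally show ?thesis .
qed

lemma residual_off_supp_ge:
  assumes "norm (A *v restrict_supp y - A *v xbar) \<le> R"
  shows "(norm (A *v restrict_supp y - A *v xbar))\<^sup>2 - 2 * R * onorm (\<lambda>x. A *v x) * off_mass y
    \<le> (norm (A *v y - A *v xbar))\<^sup>2"
proof -
  let ?u = "A *v restrict_supp y - A *v xbar" and ?w = "A *v (y - restrict_supp y)"
  have "norm ?w \<le> onorm (\<lambda>x. A *v x) * off_mass y"
    using onorm[OF matrix_vector_mul_bounded_linear, of A "y - restrict_supp y"]
      norm_sub_restrict_supp_le onorm_pos_le[OF matrix_vector_mul_bounded_linear, of A]
    by (meson mult_left_mono order.trans)
  moreover have "0 \<le> R" using assms by (meson norm_ge_zero order.trans)
  ultimately have "norm ?u * norm ?w \<le> R * (onorm (\<lambda>x. A *v x) * off_mass y)"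
    using assms by (intro mult_mono) auto
  moreover have "A *v y - A *v xbar = ?u + ?w"
    by (simp add: matrix_vector_mult_diff_distrib)
  ultimately show ?thesis
    using norm_add_power2_ge[of ?u ?w] by (simp only:)
qed

lemma objective_restrict_supp_le:
  assumes lam: "lam > 0" and R: "0 \<le> R"
  shows "\<exists>\<epsilon>>0. \<forall>y. norm (A *v restrict_supp y - A *v xbar) \<le> R \<longrightarrow> (\<forall>j. j \<notin> supp \<longrightarrow> \<bar>y$j\<bar> \<le> \<epsilon>)
           \<longrightarrow> objective lam (restrict_supp y) \<le> objective lam y"
proof -
  define C where "C = 2 * R * onorm (\<lambda>x. A *v x)"
  define n where "n = real CARD('n)"
  have C: "C \<ge> 0"
    unfolding C_def using R onorm_pos_le[OF matrix_vector_mul_bounded_linear, of A] by simp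
  have n: "n > 0" unfolding n_def by simp
  have Cn: "C * n + 1 > 0" using C n by (simp add: add_nonneg_pos)
  define \<epsilon> where "\<epsilon> = (lam / (C * n + 1)) powr (1 / (1 - q))"
  have \<epsilon>_powr: "\<epsilon> powr (q-1) = (C * n + 1) / lam"
  proof -
    have "(1 / (1 - q)) * (q - 1) = -1" using q_less_1 by (simp add: field_simps)
    then show ?thesis
      unfolding \<epsilon>_def using lam Cn by (simp add: powr_powr powr_neg_one)
  qed
  show ?thesis
  proof (intro exI[of _ \<epsilon>] conjI allI impI)
    show "\<epsilon> > 0" unfolding \<epsilon>_def using lam Cn by simp
    fix y
    assume near: "norm (A *v restrict_supp y - A *v xbar) \<le> R"
      and small: "\<forall>j. j \<notin> supp \<longrightarrow> \<bar>y$j\<bar> \<le> \<epsilon>"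
    from near have residual: "(norm (A *v restrict_supp y - A *v xbar))\<^sup>2 - C * off_mass y
        \<le> (norm (A *v y - A *v xbar))\<^sup>2"
      unfolding C_def by (rule residual_off_supp_ge)
    have "(C * n + 1) / lam * off_mass y \<le> n * off_penalty y"
      using off_mass_le_off_penalty[OF small] unfolding \<epsilon>_powr n_def .
    then have "(C * n + 1) * off_mass y \<le> lam * n * off_penalty y"
      using lam by (simp add: field_simps)
    moreover have "off_mass y \<ge> 0" unfolding off_mass_def by (simp add: sum_nonneg)
    ultimately have "n * (C * off_mass y) \<le> n * (lam * off_penalty y)"
      by (simp add: algebra_simps)
    then have "C * off_mass y \<le> lam * off_penalty y" using n by simp
    with residual show "objective lam (restrict_supp y) \<le> objective lam y"
      unfolding objective_supported[OF supported_restrict_supp] objective_def pq_norm_powr_eq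
        supp_penalty_restrict_supp off_penalty_supported[OF supported_restrict_supp]
      by (simp add: algebra_simps)
  qed
qed

lemma local_minimizer_if_min_on_supported:
  assumes lam: "lam > 0" and z: "supported z" "dist z xbar < \<delta>"
    and min: "\<forall>y. supported y \<and> dist y xbar \<le> \<delta> \<longrightarrow> objective lam z \<le> objective lam y"
  shows "local_minimizer (objective lam) z"
proof -
  have \<delta>: "\<delta> > 0" using z(2) by (meson le_less_trans zero_le_dist)
  let ?c = "onorm (\<lambda>x. A *v x)"
  have "0 \<le> ?c * \<delta>" using \<delta> onorm_pos_le[OF matrix_vector_mul_bounded_linear, of A] by simp
  then obtain \<epsilon> where \<epsilon>: "\<epsilon> > 0" and restrict_le:
    "\<forall>y. norm (A *v restrict_supp y - A *v xbar) \<le> ?c * \<delta> \<longrightarrow> (\<forall>j. j \<notin> supp \<longrightarrow> \<bar>y$j\<bar> \<le> \<epsilon>)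
      \<longrightarrow> objective lam (restrict_supp y) \<le> objective lam y"
    using objective_restrict_supp_le[OF lam] by blast
  show ?thesis unfolding local_minimizer_def
  proof (intro exI[of _ "min (\<delta> - dist z xbar) \<epsilon>"] conjI allI impI)
    show "min (\<delta> - dist z xbar) \<epsilon> > 0" using z(2) \<epsilon> by simp
    fix y assume dy: "dist y z < min (\<delta> - dist z xbar) \<epsilon>"
    have "dist (restrict_supp y) z \<le> dist y z"
      unfolding dist_norm using z(1)
      by (intro norm_le_componentwise_cart) (auto simp: restrict_supp_def supported_def)
    then have near: "dist (restrict_supp y) xbar < \<delta>"
      using dist_triangle[of "restrict_supp y" xbar z] dy by simp
    then have "objective lam z \<le> objective lam (restrict_supp y)"
      using min supported_restrict_supp by simp
    also have "\<dots> \<le> objective lam y"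
    proof (rule restrict_le[rule_format])
      have "norm (A *v (restrict_supp y - xbar)) \<le> ?c * norm (restrict_supp y - xbar)"
        by (rule onorm[OF matrix_vector_mul_bounded_linear])
      also have "\<dots> \<le> ?c * \<delta>"
        using near onorm_pos_le[OF matrix_vector_mul_bounded_linear]
        by (intro mult_left_mono) (auto simp: dist_norm)
      finally show "norm (A *v restrict_supp y - A *v xbar) \<le> ?c * \<delta>"
        by (simp add: matrix_vector_mult_diff_distrib)
      show "\<bar>y$j\<bar> \<le> \<epsilon>" if "j \<notin> supp" for j
      proof -
        have "\<bar>y$j\<bar> = \<bar>(y - z)$j\<bar>" using z(1) that by (simp add: supported_def)
        also have "\<dots> \<le> dist y z" unfolding dist_norm by (rule component_le_norm_cart)
        finally show "\<bar>y$j\<bar> \<le> \<epsilon>" using dy by simp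
      qed
    qed
    finally show "objective lam z \<le> objective lam y" .
  qed
qed

section \<open>Stationarity on the support\<close>

definition penalty_grad :: "'n \<Rightarrow> real^'n \<Rightarrow> real" where
  "penalty_grad k x = (\<Sum>i\<in>nzg. (q/p) * group_psum i x powr (q/p - 1)
                        * (of_bool (k \<in> G i) * (p * \<bar>x$k\<bar> powr (p-2) * x$k)))"

definition "penalty_grad_norm2 x = (\<Sum>k\<in>supp. (penalty_grad k x)\<^sup>2)"

definition "group_weight i = group_pnorm p (G i) xbar powr (2*(q-p)) * (\<Sum>j\<in>G i. \<bar>xbar$j\<bar> powr (2*p-2))"

definition "err_const = q\<^sup>2 * real (card nzg) * Max (group_weight ` nzg)"

lemma penalty_grad_in_group:
  assumes "i \<in> nzg" "k \<in> G i"
  shows "penalty_grad k x = q * group_psum i x powr (q/p-1) * \<bar>x$k\<bar> powr (p-2) * x$k"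
proof -
  have "penalty_grad k x = (\<Sum>i'\<in>nzg. if i' = i then (q/p) * group_psum i x powr (q/p - 1)
                             * (p * \<bar>x$k\<bar> powr (p-2) * x$k) else 0)"
    unfolding penalty_grad_def using assms group_unique by (intro sum.cong) auto
  then show ?thesis using assms(1) nzg_zg(3) p_pos by simp
qed

lemma penalty_grad_power2:
  assumes "i \<in> nzg" "k \<in> G i" "group_psum i x > 0" "x$k \<noteq> 0"
  shows "(penalty_grad k x)\<^sup>2 = q\<^sup>2 * group_psum i x powr (2*(q/p-1)) * \<bar>x$k\<bar> powr (2*p-2)"
proof -
  let ?S = "group_psum i x" and ?a = "\<bar>x$k\<bar>"
  have "(?S powr (q/p-1))\<^sup>2 = ?S powr (2*(q/p-1))"
    using assms(3) by (simp add: power2_eq_square powr_add[symmetric])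
  moreover have "(?a powr (p-2))\<^sup>2 * (x$k)\<^sup>2 = ?a powr (2*p-2)"
  proof -
    have "(x$k)\<^sup>2 = ?a powr 2" using assms(4) by (simp add: powr_realpow[symmetric])
    then have "(?a powr (p-2))\<^sup>2 * (x$k)\<^sup>2 = ?a powr (p-2) * ?a powr (p-2) * ?a powr 2"
      by (simp only: power2_eq_square[of "?a powr (p-2)"])
    also have "\<dots> = ?a powr ((p-2) + (p-2) + 2)" by (simp only: powr_add)
    finally show ?thesis by simp
  qed
  ultimately show ?thesis
    unfolding penalty_grad_in_group[OF assms(1,2)] by (simp add: power_mult_distrib)
qed

lemma group_weight_eq:
  "group_weight i = group_psum i xbar powr (2*(q/p-1)) * (\<Sum>j\<in>G i. \<bar>xbar$j\<bar> powr (2*p-2))"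
proof -
  have "(1/p) * (2*(q-p)) = 2*(q/p-1)" using p_pos by (simp add: field_simps)
  then show ?thesis
    unfolding group_weight_def group_pnorm_def group_psum_def by (simp add: powr_powr)
qed

lemma group_psum_xbar_pos: "i \<in> nzg \<Longrightarrow> group_psum i xbar > 0"
  using group_psum_pos xbar_nonzero_in_nzg by blast

lemma group_weight_pos:
  assumes "i \<in> nzg"
  shows "group_weight i > 0"
proof -
  have "(\<Sum>j\<in>G i. \<bar>xbar$j\<bar> powr (2*p-2)) > 0"
    using group_nonempty[of i] assms xbar_nonzero_in_nzg[OF assms] by (intro sum_pos) (auto simp: nzg_def)
  then show ?thesis unfolding group_weight_eq using group_psum_xbar_pos[OF assms] by simp
qed

lemma penalty_grad_norm2_xbar: "penalty_grad_norm2 xbar = q\<^sup>2 * (\<Sum>i\<in>nzg. group_weight i)"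
proof -
  have "penalty_grad_norm2 xbar = (\<Sum>i\<in>nzg. \<Sum>k\<in>G i. (penalty_grad k xbar)\<^sup>2)"
    unfolding penalty_grad_norm2_def supp_eq_Union using nzg_zg(3) group_unique
    by (intro sum.UNION_disjoint) (auto simp: disjoint_iff)
  also have "\<dots> = (\<Sum>i\<in>nzg. q\<^sup>2 * group_weight i)"
    using penalty_grad_power2 group_psum_xbar_pos xbar_nonzero_in_nzg
    by (intro sum.cong refl) (simp add: group_weight_eq sum_distrib_left mult.assoc)
  finally show ?thesis by (simp add: sum_distrib_left)
qed

lemma penalty_grad_norm2_xbar_le: "penalty_grad_norm2 xbar \<le> err_const"
proof -
  have "(\<Sum>i\<in>nzg. group_weight i) \<le> real (card nzg) * Max (group_weight ` nzg)"
    using nzg_zg(3) by (intro sum_bounded_above) auto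
  then show ?thesis
    unfolding penalty_grad_norm2_xbar err_const_def by (simp add: mult.assoc mult_left_mono)
qed

lemma tendsto_penalty_grad_norm2: "(penalty_grad_norm2 \<longlongrightarrow> penalty_grad_norm2 xbar) (at xbar)"
proof -
  have "((\<lambda>x. group_psum i x) \<longlongrightarrow> group_psum i xbar) (at xbar)" for i
    unfolding group_psum_def using p_pos by (intro tendsto_intros) auto
  then show ?thesis
    unfolding penalty_grad_norm2_def penalty_grad_def using supp_def
    by (intro tendsto_intros) (auto dest: group_psum_xbar_pos)
qed

lemma eventually_near_xbar:
  "\<exists>d>0. \<forall>x. dist x xbar < d \<longrightarrow> (\<forall>j\<in>supp. x$j \<noteq> 0) \<and> penalty_grad_norm2 x \<le> 4 * err_const"
proof (cases "supp = {}")
  case True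
  then show ?thesis
    using nzg_empty_iff by (intro exI[of _ 1]) (simp add: penalty_grad_norm2_def err_const_def)
next
  case False
  then have "0 < (\<Sum>i\<in>nzg. group_weight i)"
    using nzg_empty_iff nzg_zg(3) group_weight_pos by (intro sum_pos) auto
  then have "0 < penalty_grad_norm2 xbar"
    using q_pos unfolding penalty_grad_norm2_xbar by simp
  then have less: "penalty_grad_norm2 xbar < 4 * err_const"
    using penalty_grad_norm2_xbar_le by linarith
  have "eventually (\<lambda>x. x$j \<noteq> 0) (at xbar)" if "j \<in> supp" for j
  proof -
    have "((\<lambda>x. x$j) \<longlongrightarrow> xbar$j) (at xbar)" by (intro tendsto_intros)
    then show ?thesis using that supp_def by (intro tendsto_imp_eventually_ne) auto
  qed
  then have "eventually (\<lambda>x. (\<forall>j\<in>supp. x$j \<noteq> 0) \<and> penalty_grad_norm2 x < 4 * err_const) (at xbar)"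
    by (intro eventually_conj eventually_ball_finite order_tendstoD(2)[OF tendsto_penalty_grad_norm2 less])
      auto
  then obtain d where "d > 0" and d: "\<forall>x. x \<noteq> xbar \<and> dist x xbar < d
      \<longrightarrow> (\<forall>j\<in>supp. x$j \<noteq> 0) \<and> penalty_grad_norm2 x < 4 * err_const"
    unfolding eventually_at by auto
  have "(\<forall>j\<in>supp. x$j \<noteq> 0) \<and> penalty_grad_norm2 x \<le> 4 * err_const" if "dist x xbar < d" for x
    using d less that supp_def by (cases "x = xbar") auto
  with \<open>d > 0\<close> show ?thesis by blast
qed

lemma nth_add_scaleR_axis: "(z + t *\<^sub>R axis k 1) $ j = z$j + t * (if j = k then 1 else 0)"
  by (simp add: axis_def)

lemma group_psum_line_deriv:
  assumes "i \<in> nzg" "\<forall>j\<in>supp. z$j \<noteq> 0"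
  shows "((\<lambda>t. group_psum i (z + t *\<^sub>R axis k 1)) has_real_derivative
           of_bool (k \<in> G i) * (p * \<bar>z$k\<bar> powr (p-2) * z$k)) (at 0)"
proof -
  have "((\<lambda>t. \<Sum>j\<in>G i. \<bar>z$j + t * (if j = k then 1 else 0)\<bar> powr p) has_real_derivative
      (\<Sum>j\<in>G i. p * \<bar>z$j\<bar> powr (p-2) * z$j * (if j = k then 1 else 0))) (at 0)"
    using assms nzg_subset_supp by (intro DERIV_sum has_real_derivative_abs_powr_line) auto
  moreover have "(\<Sum>j\<in>G i. p * \<bar>z$j\<bar> powr (p-2) * z$j * (if j = k then 1 else 0))
      = of_bool (k \<in> G i) * (p * \<bar>z$k\<bar> powr (p-2) * z$k)"
    by (simp add: if_distrib[of "\<lambda>t. _ * t"] sum.delta' cong: if_cong)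
  ultimately show ?thesis unfolding group_psum_def nth_add_scaleR_axis by simp
qed

lemma supp_penalty_line_deriv:
  assumes "\<forall>j\<in>supp. z$j \<noteq> 0"
  shows "((\<lambda>t. supp_penalty (z + t *\<^sub>R axis k 1)) has_real_derivative penalty_grad k z) (at 0)"
  unfolding supp_penalty_def penalty_grad_def
proof (intro DERIV_sum)
  fix i assume i: "i \<in> nzg"
  have "group_psum i (z + 0 *\<^sub>R axis k 1) > 0"
    using group_psum_pos[OF i] assms nzg_subset_supp[OF i] by simp
  from DERIV_fun_powr[OF group_psum_line_deriv[OF i assms] this, of "q/p"]
  show "((\<lambda>t. group_psum i (z + t *\<^sub>R axis k 1) powr (q/p)) has_real_derivative
      (q/p) * group_psum i z powr (q/p - 1) * (of_bool (k \<in> G i) * (p * \<bar>z$k\<bar> powr (p-2) * z$k))) (at 0)"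
    by simp
qed

lemma stationary_coordinate:
  assumes z: "supported z" "\<forall>j\<in>supp. z$j \<noteq> 0" and k: "k \<in> supp" and "\<rho> > 0"
    and min: "\<forall>t. \<bar>t\<bar> < \<rho> \<longrightarrow> objective lam z \<le> objective lam (z + t *\<^sub>R axis k 1)"
  shows "column k A \<bullet> (A *v (z - xbar)) = - (lam/2) * penalty_grad k z"
proof -
  have supported_line: "supported (z + t *\<^sub>R axis k 1)" for t
    using z(1) k unfolding supported_def axis_def by auto
  have line: "objective lam (z + t *\<^sub>R axis k 1)
      = (norm (A *v (z - xbar) + t *\<^sub>R column k A))\<^sup>2 + lam * supp_penalty (z + t *\<^sub>R axis k 1)" for t
    unfolding objective_supported[OF supported_line]
    by (simp add: matrix_vector_right_distrib matrix_vector_mult_diff_distrib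
        matrix_vector_mult_scaleR matrix_vector_mult_basis algebra_simps)
  have "((\<lambda>t. objective lam (z + t *\<^sub>R axis k 1)) has_real_derivative
      2 * ((A *v (z - xbar)) \<bullet> column k A) + lam * penalty_grad k z) (at 0)"
    unfolding line
    by (intro DERIV_add DERIV_cmult has_real_derivative_norm_power2_line supp_penalty_line_deriv z(2))
  from DERIV_local_min[OF this \<open>\<rho> > 0\<close>] min
  show ?thesis by (simp add: inner_commute field_simps)
qed

lemma stationary_if_min_on_supported:
  assumes z: "supported z" "\<forall>j\<in>supp. z$j \<noteq> 0" "dist z xbar < \<delta>"
    and min: "\<forall>y. supported y \<and> dist y xbar \<le> \<delta> \<longrightarrow> objective lam z \<le> objective lam y"
    and k: "k \<in> supp"
  shows "column k A \<bullet> (A *v (z - xbar)) = - (lam/2) * penalty_grad k z"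
proof (rule stationary_coordinate[OF z(1,2) k])
  show "\<delta> - dist z xbar > 0" using z(3) by simp
  show "\<forall>t. \<bar>t\<bar> < \<delta> - dist z xbar \<longrightarrow> objective lam z \<le> objective lam (z + t *\<^sub>R axis k 1)"
  proof (intro allI impI)
    fix t assume t: "\<bar>t\<bar> < \<delta> - dist z xbar"
    have "dist (z + t *\<^sub>R axis k 1) xbar \<le> dist z xbar + \<bar>t\<bar>"
      using norm_triangle_ineq[of "z - xbar" "t *\<^sub>R axis k (1::real)"]
      by (simp add: dist_norm algebra_simps)
    moreover have "supported (z + t *\<^sub>R axis k 1)"
      using z(1) k unfolding supported_def axis_def by auto
    ultimately show "objective lam z \<le> objective lam (z + t *\<^sub>R axis k 1)"
      using min t by simp
  qed
qed

lemma norm_power2_le_if_stationary: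
  assumes "supported z"
    and stat: "\<forall>k\<in>supp. column k A \<bullet> (A *v (z - xbar)) = - (lam/2) * penalty_grad k z"
  shows "(norm (z - xbar))\<^sup>2 \<le> ginv_norm\<^sup>2 * (lam/2)\<^sup>2 * penalty_grad_norm2 z"
proof -
  have "(\<Sum>k\<in>supp. (column k A \<bullet> (A *v (z - xbar)))\<^sup>2) = (lam/2)\<^sup>2 * penalty_grad_norm2 z"
    unfolding penalty_grad_norm2_def sum_distrib_left using stat
    by (intro sum.cong) (auto simp: power_mult_distrib power_divide)
  moreover have "penalty_grad_norm2 z \<ge> 0"
    unfolding penalty_grad_norm2_def by (simp add: sum_nonneg)
  ultimately have "norm (z - xbar) \<le> ginv_norm * (\<bar>lam/2\<bar> * sqrt (penalty_grad_norm2 z))"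
    using norm_supported_le[OF supported_diff[OF assms(1) supported_xbar]]
    by (simp add: real_sqrt_mult)
  then have "(norm (z - xbar))\<^sup>2 \<le> (ginv_norm * (\<bar>lam/2\<bar> * sqrt (penalty_grad_norm2 z)))\<^sup>2"
    by (rule power_mono) simp
  also have "\<dots> = ginv_norm\<^sup>2 * (lam/2)\<^sup>2 * penalty_grad_norm2 z"
    using \<open>penalty_grad_norm2 z \<ge> 0\<close>
    by (simp only: power_mult_distrib power2_abs real_sqrt_pow2 mult.assoc)
  finally show ?thesis .
qed

lemma norm_power2_le_if_below_xbar:
  assumes "lam \<ge> 0" "supported z" "objective lam z \<le> objective lam xbar"
  shows "(norm (z - xbar))\<^sup>2 \<le> lam * (ginv_norm\<^sup>2 * (\<Sum>k\<in>supp. (norm (column k A))\<^sup>2) * supp_penalty xbar)"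
proof -
  have "0 \<le> supp_penalty z"
    unfolding supp_penalty_def by (simp add: sum_nonneg)
  then have "(norm (A *v (z - xbar)))\<^sup>2 \<le> lam * supp_penalty xbar"
    using assms objective_supported[OF assms(2)] objective_supported[OF supported_xbar]
    by (simp add: matrix_vector_mult_diff_distrib) (smt (verit) mult_nonneg_nonneg)
  with norm_power2_supported_le[OF supported_diff[OF assms(2) supported_xbar]]
  show ?thesis
    by (smt (verit) mult.commute mult.left_commute mult_left_mono sum_nonneg zero_le_power2)
qed

lemma exists_min_on_supported:
  assumes "0 \<le> \<delta>"
  shows "\<exists>z. supported z \<and> (\<forall>y. supported y \<and> dist y xbar \<le> \<delta> \<longrightarrow> objective lam z \<le> objective lam y)"
proof -
  let ?K = "cball xbar \<delta> \<inter> {x. supported x}"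
  have "compact ?K" "xbar \<in> ?K"
    using closed_supported supported_xbar assms by (auto intro: compact_Int_closed)
  then obtain z where "z \<in> ?K" and "\<forall>y\<in>?K. objective lam z \<le> objective lam y"
    using continuous_attains_inf[OF _ _ continuous_on_objective] by blast
  then show ?thesis by (auto simp: dist_commute)
qed

lemma small_lambda_local_minimizers:
  "\<exists>\<kappa>>0. \<forall>lam\<in>{0<..<\<kappa>}. \<exists>z. local_minimizer (objective lam) z
          \<and> (norm (z - xbar))\<^sup>2 \<le> lam\<^sup>2 * ginv_norm\<^sup>2 * err_const"
proof -
  obtain d where "d > 0" and d: "\<forall>x. dist x xbar < d
      \<longrightarrow> (\<forall>j\<in>supp. x$j \<noteq> 0) \<and> penalty_grad_norm2 x \<le> 4 * err_const"
    using eventually_near_xbar by blast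
  define \<delta> where "\<delta> = d / 2"
  define X where "X = ginv_norm\<^sup>2 * (\<Sum>k\<in>supp. (norm (column k A))\<^sup>2) * supp_penalty xbar"
  have \<delta>: "\<delta> > 0" "\<delta> < d" unfolding \<delta>_def using \<open>d > 0\<close> by auto
  have X: "X \<ge> 0" unfolding X_def supp_penalty_def by (simp add: sum_nonneg)
  show ?thesis
  proof (intro exI[of _ "\<delta>\<^sup>2 / (X + 1)"] conjI ballI)
    show "\<delta>\<^sup>2 / (X + 1) > 0" using \<delta> X by simp
    fix lam assume "lam \<in> {0<..<\<delta>\<^sup>2 / (X + 1)}"
    then have lam: "lam > 0" "lam * (X + 1) < \<delta>\<^sup>2" using X by (auto simp: field_simps)
    obtain z where z: "supported z"
      and min: "\<forall>y. supported y \<and> dist y xbar \<le> \<delta> \<longrightarrow> objective lam z \<le> objective lam y"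
      using exists_min_on_supported[of \<delta> lam] \<delta> by auto
    have "(norm (z - xbar))\<^sup>2 \<le> lam * X"
      unfolding X_def using lam(1) min \<delta> supported_xbar
      by (intro norm_power2_le_if_below_xbar z) auto
    also have "\<dots> < \<delta>\<^sup>2" using lam X by (simp add: algebra_simps)
    finally have near: "dist z xbar < \<delta>"
      using \<delta> by (simp add: dist_norm power_less_imp_less_base)
    then have nonzero: "\<forall>j\<in>supp. z$j \<noteq> 0" and grad: "penalty_grad_norm2 z \<le> 4 * err_const"
      using d \<delta> by auto
    have "(norm (z - xbar))\<^sup>2 \<le> ginv_norm\<^sup>2 * (lam/2)\<^sup>2 * penalty_grad_norm2 z"
      using stationary_if_min_on_supported[OF z nonzero near min]
      by (intro norm_power2_le_if_stationary z) blast
    also have "\<dots> \<le> ginv_norm\<^sup>2 * (lam/2)\<^sup>2 * (4 * err_const)"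
      using grad by (intro mult_left_mono) auto
    also have "\<dots> = lam\<^sup>2 * ginv_norm\<^sup>2 * err_const"
      by (simp add: power_divide)
    finally have "(norm (z - xbar))\<^sup>2 \<le> lam\<^sup>2 * ginv_norm\<^sup>2 * err_const" .
    moreover have "local_minimizer (objective lam) z"
      using local_minimizer_if_min_on_supported[OF lam(1) z near min] .
    ultimately show "\<exists>z. local_minimizer (objective lam) z
        \<and> (norm (z - xbar))\<^sup>2 \<le> lam\<^sup>2 * ginv_norm\<^sup>2 * err_const"
      by blast
  qed
qed

end

theorem theorem2p2:
  fixes p q :: real and A :: "real^'n^'m" and xbar :: "real^'n"
    and r :: nat and G :: "nat \<Rightarrow> 'n set"
  assumes "group_partition r G"
    and "0 < q" and "q < 1" and "1 \<le> p"
    and "\<forall>i\<in>{1..r}. group_nonzero (G i) xbar \<longrightarrow> group_active (G i) xbar"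
    and "cols_independent A {j. xbar $ j \<noteq> 0}"
  shows "\<exists>\<kappa>>0. \<exists>xs :: real \<Rightarrow> real^'n. \<forall>lam\<in>{0<..<\<kappa>}.
     local_minimizer (\<lambda>x. (norm (A *v x - A *v xbar))\<^sup>2 + lam * pq_norm p q r G x powr q) (xs lam)
     \<and> (norm (xs lam - xbar))\<^sup>2 \<le>
         lam\<^sup>2 * q\<^sup>2 * real (card {i\<in>{1..r}. group_nonzero (G i) xbar})
         * (spec_norm_on {j. xbar $ j \<noteq> 0} (inv_on {j. xbar $ j \<noteq> 0} (gram_sub A)))\<^sup>2
         * Max ((\<lambda>i. group_pnorm p (G i) xbar powr (2 * (q - p))
                     * (\<Sum>j\<in>G i. \<bar>xbar $ j\<bar> powr (2 * p - 2)))
                ` {i\<in>{1..r}. group_nonzero (G i) xbar})"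
proof -
  interpret group_sparse p q A xbar r G
    using assms by unfold_locales
  obtain \<kappa> where "\<kappa> > 0" and "\<forall>lam\<in>{0<..<\<kappa>}. \<exists>z. local_minimizer (objective lam) z
      \<and> (norm (z - xbar))\<^sup>2 \<le> lam\<^sup>2 * ginv_norm\<^sup>2 * err_const"
    using small_lambda_local_minimizers by blast
  then obtain xs where xs: "\<forall>lam\<in>{0<..<\<kappa>}. local_minimizer (objective lam) (xs lam)
      \<and> (norm (xs lam - xbar))\<^sup>2 \<le> lam\<^sup>2 * ginv_norm\<^sup>2 * err_const"
    by metis
  have objective: "objective lam = (\<lambda>x. (norm (A *v x - A *v xbar))\<^sup>2 + lam * pq_norm p q r G x powr q)"
    for lam
    by (simp add: objective_def fun_eq_iff)
  have bound: "lam\<^sup>2 * ginv_norm\<^sup>2 * err_const =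
      lam\<^sup>2 * q\<^sup>2 * real (card {i\<in>{1..r}. group_nonzero (G i) xbar})
      * (spec_norm_on {j. xbar $ j \<noteq> 0} (inv_on {j. xbar $ j \<noteq> 0} (gram_sub A)))\<^sup>2
      * Max ((\<lambda>i. group_pnorm p (G i) xbar powr (2 * (q - p))
                  * (\<Sum>j\<in>G i. \<bar>xbar $ j\<bar> powr (2 * p - 2)))
             ` {i\<in>{1..r}. group_nonzero (G i) xbar})" for lam
    unfolding ginv_norm_def Ginv_def err_const_def supp_def nzg_def group_weight_def[abs_def]
    by (simp add: mult_ac)
  show ?thesis
    using \<open>\<kappa> > 0\<close> xs unfolding objective bound by blast
qed

end
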